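(* Let $k$ be a positive integer. If $v,w\in V$ lie in the same connected component of $\mathcal F_k$, then $\phi_k(v)=\phi_k(w)$.
   Context: The vertex set $V$ consists of all reduced fractions $p/q$ with $p,q\in\mathbb Z$, $\gcd(p,q)=1$, together with $1/0$; here $p/q$ and $(-p)/(-q)$ denote the same vertex. For vertices define $d(p/q,a/b)=|pb-qa|$. The graph $\mathcal F_k$ has vertex set $V$, with an edge between $p/q$ and $a/b$ exactly when $d(p/q,a/b)=k$. An element $(a,b)\in(\mathbb Z/k\mathbb Z)^2$ is admissible if for $\lambda\in\mathbb Z/k\mathbb Z$, $(\lambda a,\lambda b)=0$ implies $\lambda=0$; $\mathcal L_k$ is the set of admissible elements modulo $v\sim\lambda v$ for units $\lambda\in(\mathbb Z/k\mathbb Z)^*$; $\phi_k:V\to\mathcal L_k$ sends $p/q$ to the class of $(p\bmod k,q\bmod k)$. *)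

theory Defs
  imports Main "HOL-Computational_Algebra.Primes"
begin

text \<open>Vertices p/q are represented by coprime integer pairs (p,q); the pairs (p,q)
and (-p,-q) represent the same vertex (this identification is built into the
connectivity relation below). 1/0 is the pair (1,0).\<close>

definition farey_V :: "(int \<times> int) set" where
  "farey_V = {(p, q). gcd p q = 1}"

definition farey_d :: "int \<times> int \<Rightarrow> int \<times> int \<Rightarrow> int" where
  "farey_d v w = \<bar>fst v * snd w - snd v * fst w\<bar>"

definition farey_edge :: "int \<Rightarrow> int \<times> int \<Rightarrow> int \<times> int \<Rightarrow> bool" where
  "farey_edge k v w \<longleftrightarrow> v \<in> farey_V \<and> w \<in> farey_V \<and> farey_d v w = k"

definition same_vertex :: "int \<times> int \<Rightarrow> int \<times> int \<Rightarrow> bool" where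
  "same_vertex v w \<longleftrightarrow> w = v \<or> w = (- fst v, - snd v)"

definition same_component :: "int \<Rightarrow> int \<times> int \<Rightarrow> int \<times> int \<Rightarrow> bool" where
  "same_component k = (\<lambda>v w. v \<in> farey_V \<and> w \<in> farey_V \<and>
       (farey_edge k v w \<or> same_vertex v w))\<^sup>*\<^sup>*"

text \<open>Elements of Z/kZ are represented by integers in {0..<k}.\<close>
definition admissible :: "int \<Rightarrow> int \<times> int \<Rightarrow> bool" where
  "admissible k ab \<longleftrightarrow> fst ab \<in> {0..<k} \<and> snd ab \<in> {0..<k} \<and>
     (\<forall>l\<in>{0..<k}. (l * fst ab) mod k = 0 \<and> (l * snd ab) mod k = 0 \<longrightarrow> l = 0)"

definition unit_class :: "int \<Rightarrow> int \<times> int \<Rightarrow> (int \<times> int) set" where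
  "unit_class k ab = {((l * fst ab) mod k, (l * snd ab) mod k) | l. l \<in> {0..<k} \<and> coprime l k}"

definition L_k :: "int \<Rightarrow> (int \<times> int) set set" where
  "L_k k = unit_class k ` {ab. admissible k ab}"

definition phi_k :: "int \<Rightarrow> int \<times> int \<Rightarrow> (int \<times> int) set" where
  "phi_k k v = unit_class k (fst v mod k, snd v mod k)"

end

theory Submission
  imports Defs "HOL-Number_Theory.Cong"
begin

text \<open>The class \<open>\<phi>\<^sub>k(p/q)\<close> only sees \<open>(p, q)\<close> modulo \<open>k\<close> up to a unit, so it suffices
that adjacent vertices are unit multiples of each other modulo \<open>k\<close>. If \<open>p/q\<close> and \<open>a/b\<close> are
adjacent, then \<open>pb - qa \<equiv> 0 (mod k)\<close>; with \<open>xp + yq = 1\<close> the scalar \<open>u = ax + by\<close> satisfies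
\<open>(a, b) \<equiv> u (p, q) (mod k)\<close>, and \<open>u\<close> is a unit because \<open>a/b\<close> is reduced too:
\<open>x'a + y'b = 1\<close> gives \<open>u (x'p + y'q) \<equiv> 1\<close>.\<close>

lemma unit_class_mult_unit_subset:
  fixes k u a b :: int
  assumes "k > 0" and "coprime u k"
  shows "unit_class k ((u * a) mod k, (u * b) mod k) \<subseteq> unit_class k (a mod k, b mod k)"
proof
  fix z assume "z \<in> unit_class k ((u * a) mod k, (u * b) mod k)"
  then obtain l where z: "z = ((l * ((u * a) mod k)) mod k, (l * ((u * b) mod k)) mod k)"
    and l: "l \<in> {0..<k}" "coprime l k"
    unfolding unit_class_def by auto
  define l' where "l' = (l * u) mod k"
  have "l' \<in> {0..<k}" "coprime l' k"
    using assms l(2) unfolding l'_def by auto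
  moreover have "(l * ((u * c) mod k)) mod k = (l' * (c mod k)) mod k" for c
    unfolding l'_def by (simp add: mod_mult_right_eq mod_mult_left_eq mod_mult_eq mult.assoc)
  ultimately show "z \<in> unit_class k (a mod k, b mod k)"
    unfolding unit_class_def z by (auto intro!: exI[of _ l'])
qed

lemma unit_class_mult_unit:
  fixes k u a b :: int
  assumes "k > 0" and "coprime u k"
  shows "unit_class k ((u * a) mod k, (u * b) mod k) = unit_class k (a mod k, b mod k)"
proof
  show "unit_class k ((u * a) mod k, (u * b) mod k) \<subseteq> unit_class k (a mod k, b mod k)"
    using unit_class_mult_unit_subset[OF assms] .
  obtain v where v: "[u * v = 1] (mod k)"
    using cong_solve_coprime_int[OF assms(2)] by blast
  then have "coprime v k"
    by (auto simp: coprime_iff_invertible_int mult.commute)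
  have cancel: "(v * ((u * c) mod k)) mod k = c mod k" for c
  proof -
    have "[v * ((u * c) mod k) = (u * v) * c] (mod k)"
      by (simp add: cong_def mod_mult_right_eq mult.commute mult.left_commute)
    also have "[(u * v) * c = 1 * c] (mod k)"
      using v by (rule cong_scalar_right)
    finally show ?thesis by (simp add: cong_def)
  qed
  show "unit_class k (a mod k, b mod k) \<subseteq> unit_class k ((u * a) mod k, (u * b) mod k)"
    using unit_class_mult_unit_subset[OF assms(1) \<open>coprime v k\<close>, of "(u * a) mod k" "(u * b) mod k"]
    by (simp add: cancel)
qed

lemma phi_k_cong_unit_multiple:
  fixes k u :: int
  assumes "k > 0" and "coprime u k"
    and "[fst w = u * fst v] (mod k)" and "[snd w = u * snd v] (mod k)"
  shows "phi_k k w = phi_k k v"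
  using assms unit_class_mult_unit[OF assms(1,2)] by (simp add: phi_k_def cong_def)

lemma reduced_pairs_cong_unit_multiple:
  fixes k p q a b :: int
  assumes "coprime p q" and "coprime a b" and "k dvd p * b - q * a"
  shows "\<exists>u. coprime u k \<and> [a = u * p] (mod k) \<and> [b = u * q] (mod k)"
proof -
  obtain x y where xy: "x * p + y * q = 1"
    using bezout_int[of p q] assms(1) by (auto simp: coprime_iff_gcd_eq_1)
  obtain x' y' where xy': "x' * a + y' * b = 1"
    using bezout_int[of a b] assms(2) by (auto simp: coprime_iff_gcd_eq_1)
  define u where "u = a * x + b * y"
  have "u * p - a = u * p - a * (x * p + y * q)"
    using xy by simp
  also have "\<dots> = y * (p * b - q * a)"
    unfolding u_def by (simp add: algebra_simps)
  finally have a: "[a = u * p] (mod k)"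
    using assms(3) by (simp add: cong_iff_dvd_diff dvd_diff_commute[of k a])
  have "u * q - b = u * q - b * (x * p + y * q)"
    using xy by simp
  also have "\<dots> = - x * (p * b - q * a)"
    unfolding u_def by (simp add: algebra_simps)
  finally have b: "[b = u * q] (mod k)"
    using assms(3) by (simp add: cong_iff_dvd_diff dvd_diff_commute[of k b])
  have "[u * (x' * p + y' * q) = x' * a + y' * b] (mod k)"
    using cong_add[OF cong_scalar_left[OF a, of x'] cong_scalar_left[OF b, of y']]
    by (simp add: cong_sym_eq algebra_simps)
  then have "coprime u k"
    using xy' coprime_iff_invertible_int by auto
  with a b show ?thesis by blast
qed

lemma phi_k_farey_edge:
  assumes "k > 0" and "farey_edge k v w"
  shows "phi_k k v = phi_k k w"
proof -
  have "k dvd fst v * snd w - snd v * fst w"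
    using assms(2) unfolding farey_edge_def farey_d_def by auto
  moreover have "coprime (fst v) (snd v)" "coprime (fst w) (snd w)"
    using assms(2) by (auto simp: farey_edge_def farey_V_def coprime_iff_gcd_eq_1)
  ultimately obtain u where "coprime u k" "[fst w = u * fst v] (mod k)" "[snd w = u * snd v] (mod k)"
    using reduced_pairs_cong_unit_multiple by blast
  then show ?thesis
    using phi_k_cong_unit_multiple[OF assms(1)] by metis
qed

lemma phi_k_same_vertex:
  assumes "k > 0" and "same_vertex v w"
  shows "phi_k k v = phi_k k w"
  using assms(2) phi_k_cong_unit_multiple[OF assms(1), of "-1" w v]
  unfolding same_vertex_def by auto

theorem lemma4p1:
  fixes k :: int and v w :: "int \<times> int"
  assumes "k > 0"
    and "v \<in> farey_V" and "w \<in> farey_V"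
    and "same_component k v w"
  shows "phi_k k v = phi_k k w"
  using assms(4) unfolding same_component_def
proof (induction rule: rtranclp_induct)
  case base
  then show ?case by simp
next
  case (step y z)
  then show ?case
    using phi_k_farey_edge[OF assms(1)] phi_k_same_vertex[OF assms(1)] by metis
qed

end
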